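(* Let $V$ be a real vector space of finite even dimension with nondegenerate quadratic form $Q$, and let $\rho$ be a nonzero $c$-compatible representation of $\mathbb{C}l(V)$ on a finite-dimensional complex vector space $K$ with nondegenerate hermitian form $(\cdot,\cdot)$. Let $\sigma=\mathrm{Ad}_b\circ c$ be an admissible real structure with $b$ in the complex Clifford group. For $x\in\mathbb{C}l(V)$ let $(\cdot,\cdot)_x=(\cdot,\rho(x)\cdot)$. Then $(\cdot,\cdot)_x$ is a $\sigma$-compatible Krein product on $K$ iff $x=x^\times$ and $x$ is proportional to $b^{-1}$.
   Context: $Cl(V,Q)$ is the real Clifford algebra with $v^2=+Q(v)$, $\mathbb{C}l(V)$ its complexification with complex conjugation $c$; $T$ the linear antiautomorphism restricting to the identity on $V$; $a^\times=c(T(a))$; for a real structure $\sigma$, $a^{\times_\sigma}=\sigma(T(a))$. A real structure is an involutive antilinear algebra automorphism stabilizing $V^{\mathbb{C}}$; admissible means commuting with $c$; $\mathrm{Ad}_b(a)=bab^{-1}$; the complex Clifford group consists of invertible $g$ with $gV^{\mathbb{C}}g^{-1}\subset V^{\mathbb{C}}$. $\rho$ is $c$-compatible if $(\rho(a)\psi,\phi)=(\psi,\rho(a^\times)\phi)$ for all $a,\psi,\phi$. A Krein product is a nondegenerate hermitian form $(\cdot,\cdot)'$; it is $\sigma$-compatible if $(\rho(a)\psi,\phi)'=(\psi,\rho(a^{\times_\sigma})\phi)'$ for all $a,\psi,\phi$. "Proportional" means a nonzero complex multiple. *)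

theory Defs
  imports "HOL-Analysis.Analysis"
begin

text \<open>Complexified Clifford algebra of V = R^n with diagonal quadratic form
  Q(v) = sum q_i v_i^2 (q_i nonzero), convention v^2 = +Q(v).
  Elements are coefficient functions on blades (subsets of {..<n}).\<close>

type_synonym clel = "nat set \<Rightarrow> complex"

definition cl_carrier :: "nat \<Rightarrow> clel set" where
  "cl_carrier n = {x. \<forall>A. x A \<noteq> 0 \<longrightarrow> A \<subseteq> {..<n}}"

definition blade_sign :: "(nat \<Rightarrow> real) \<Rightarrow> nat set \<Rightarrow> nat set \<Rightarrow> complex" where
  "blade_sign q A B = (-1) ^ card {(i,j). i \<in> A \<and> j \<in> B \<and> j < i}
      * complex_of_real (\<Prod>i\<in>A \<inter> B. q i)"

definition cl_mult :: "nat \<Rightarrow> (nat \<Rightarrow> real) \<Rightarrow> clel \<Rightarrow> clel \<Rightarrow> clel" where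
  "cl_mult n q x y = (\<lambda>C. \<Sum>A\<in>Pow {..<n}. \<Sum>B\<in>Pow {..<n}.
      if (A - B) \<union> (B - A) = C then x A * y B * blade_sign q A B else 0)"

definition cl_one :: clel where
  "cl_one = (\<lambda>A. if A = {} then 1 else 0)"

definition cl_add :: "clel \<Rightarrow> clel \<Rightarrow> clel" where
  "cl_add x y = (\<lambda>A. x A + y A)"

definition cl_scale :: "complex \<Rightarrow> clel \<Rightarrow> clel" where
  "cl_scale c x = (\<lambda>A. c * x A)"

definition cl_conj :: "clel \<Rightarrow> clel" where
  "cl_conj x = (\<lambda>A. cnj (x A))"

text \<open>T: the complex-linear antiautomorphism that is the identity on V (reversion)\<close>
definition cl_rev :: "clel \<Rightarrow> clel" where
  "cl_rev x = (\<lambda>A. (-1) ^ (card A * (card A - 1) div 2) * x A)"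

definition cl_cross :: "clel \<Rightarrow> clel" where
  "cl_cross x = cl_conj (cl_rev x)"

definition cl_vectors :: "nat \<Rightarrow> clel set" where
  "cl_vectors n = {x \<in> cl_carrier n. \<forall>A. x A \<noteq> 0 \<longrightarrow> card A = 1}"

definition cl_invertible :: "nat \<Rightarrow> (nat \<Rightarrow> real) \<Rightarrow> clel \<Rightarrow> bool" where
  "cl_invertible n q g \<longleftrightarrow> g \<in> cl_carrier n \<and>
     (\<exists>h\<in>cl_carrier n. cl_mult n q g h = cl_one \<and> cl_mult n q h g = cl_one)"

definition cl_inv :: "nat \<Rightarrow> (nat \<Rightarrow> real) \<Rightarrow> clel \<Rightarrow> clel" where
  "cl_inv n q g = (SOME h. h \<in> cl_carrier n \<and> cl_mult n q g h = cl_one \<and> cl_mult n q h g = cl_one)"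

definition cl_group :: "nat \<Rightarrow> (nat \<Rightarrow> real) \<Rightarrow> clel set" where
  "cl_group n q = {g. cl_invertible n q g \<and>
     (\<forall>v\<in>cl_vectors n. cl_mult n q (cl_mult n q g v) (cl_inv n q g) \<in> cl_vectors n)}"

definition real_structure :: "nat \<Rightarrow> (nat \<Rightarrow> real) \<Rightarrow> (clel \<Rightarrow> clel) \<Rightarrow> bool" where
  "real_structure n q \<sigma> \<longleftrightarrow>
     (\<forall>x\<in>cl_carrier n. \<sigma> x \<in> cl_carrier n) \<and>
     (\<forall>x\<in>cl_carrier n. \<sigma> (\<sigma> x) = x) \<and>
     (\<forall>x\<in>cl_carrier n. \<forall>y\<in>cl_carrier n. \<sigma> (cl_add x y) = cl_add (\<sigma> x) (\<sigma> y)) \<and>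
     (\<forall>c. \<forall>x\<in>cl_carrier n. \<sigma> (cl_scale c x) = cl_scale (cnj c) (\<sigma> x)) \<and>
     (\<forall>x\<in>cl_carrier n. \<forall>y\<in>cl_carrier n. \<sigma> (cl_mult n q x y) = cl_mult n q (\<sigma> x) (\<sigma> y)) \<and>
     \<sigma> ` cl_vectors n \<subseteq> cl_vectors n"

definition admissible_real_structure :: "nat \<Rightarrow> (nat \<Rightarrow> real) \<Rightarrow> (clel \<Rightarrow> clel) \<Rightarrow> bool" where
  "admissible_real_structure n q \<sigma> \<longleftrightarrow> real_structure n q \<sigma> \<and>
     (\<forall>x\<in>cl_carrier n. \<sigma> (cl_conj x) = cl_conj (\<sigma> x))"

definition cross_sigma :: "(clel \<Rightarrow> clel) \<Rightarrow> clel \<Rightarrow> clel" where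
  "cross_sigma \<sigma> x = \<sigma> (cl_rev x)"

text \<open>Forms on K = complex^'k, antilinear in the first argument, linear in the second.\<close>
definition hermitian_form :: "(complex^'k \<Rightarrow> complex^'k \<Rightarrow> complex) \<Rightarrow> bool" where
  "hermitian_form h \<longleftrightarrow>
     (\<forall>\<psi> \<phi> \<eta>. h \<psi> (\<phi> + \<eta>) = h \<psi> \<phi> + h \<psi> \<eta>) \<and>
     (\<forall>\<psi> \<phi> c. h \<psi> (c *s \<phi>) = c * h \<psi> \<phi>) \<and>
     (\<forall>\<psi> \<phi>. h \<phi> \<psi> = cnj (h \<psi> \<phi>))"

definition nondegenerate_form :: "(complex^'k \<Rightarrow> complex^'k \<Rightarrow> complex) \<Rightarrow> bool" where
  "nondegenerate_form h \<longleftrightarrow> (\<forall>\<psi>. (\<forall>\<phi>. h \<psi> \<phi> = 0) \<longrightarrow> \<psi> = 0)"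

definition krein_product :: "(complex^'k \<Rightarrow> complex^'k \<Rightarrow> complex) \<Rightarrow> bool" where
  "krein_product h \<longleftrightarrow> hermitian_form h \<and> nondegenerate_form h"

definition cl_rep :: "nat \<Rightarrow> (nat \<Rightarrow> real) \<Rightarrow> (clel \<Rightarrow> complex^'k^'k) \<Rightarrow> bool" where
  "cl_rep n q \<rho> \<longleftrightarrow>
     (\<forall>x\<in>cl_carrier n. \<forall>y\<in>cl_carrier n. \<rho> (cl_add x y) = \<rho> x + \<rho> y) \<and>
     (\<forall>c. \<forall>x\<in>cl_carrier n. \<rho> (cl_scale c x) = (\<chi> i j. c * \<rho> x $ i $ j)) \<and>
     (\<forall>x\<in>cl_carrier n. \<forall>y\<in>cl_carrier n. \<rho> (cl_mult n q x y) = \<rho> x ** \<rho> y) \<and>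
     \<rho> cl_one = mat 1"

definition c_compatible :: "nat \<Rightarrow> (complex^'k \<Rightarrow> complex^'k \<Rightarrow> complex) \<Rightarrow> (clel \<Rightarrow> complex^'k^'k) \<Rightarrow> bool" where
  "c_compatible n h \<rho> \<longleftrightarrow>
     (\<forall>a\<in>cl_carrier n. \<forall>\<psi> \<phi>. h (\<rho> a *v \<psi>) \<phi> = h \<psi> (\<rho> (cl_cross a) *v \<phi>))"

definition sigma_compatible :: "nat \<Rightarrow> (clel \<Rightarrow> clel) \<Rightarrow> (complex^'k \<Rightarrow> complex^'k \<Rightarrow> complex) \<Rightarrow> (clel \<Rightarrow> complex^'k^'k) \<Rightarrow> bool" where
  "sigma_compatible n \<sigma> h \<rho> \<longleftrightarrow>
     (\<forall>a\<in>cl_carrier n. \<forall>\<psi> \<phi>. h (\<rho> a *v \<psi>) \<phi> = h \<psi> (\<rho> (cross_sigma \<sigma> a) *v \<phi>))"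

end

theory Submission
  imports Defs
begin

(* In even dimension the complexified Clifford algebra has trivial centre and no proper ideals.
   Both follow from one averaging step: z \<mapsto> (z + e\<^sub>i z e\<^sub>i / q\<^sub>i) / 2 kills the blade
   components of z that anticommute with the generator e\<^sub>i, and after all generators only the
   scalar part survives. Hence a representation is faithful (a blade moves any component into the
   scalar slot), and an element whose image commutes with the whole representation is a scalar.

   By c-compatibility, \<rho>(a) is adjoint to \<rho>(a\<^sup>\<times>), so (\<cdot>, \<rho>(x)\<cdot>) is hermitian iff
   \<rho>(x\<^sup>\<times>) = \<rho>(x), i.e. x = x\<^sup>\<times>. Since a\<^sup>\<times>\<^sup>\<sigma> = b a\<^sup>\<times> b\<^sup>-\<^sup>1, it is \<sigma>-compatible
   iff \<rho>(x b) commutes with the representation, i.e. x b = t is a scalar and x = t b\<^sup>-\<^sup>1;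
   the form is then nondegenerate iff t \<noteq> 0. *)

definition blade :: "nat set \<Rightarrow> clel" where
  "blade A = (\<lambda>C. if C = A then 1 else 0)"

lemma cl_mult_carrier: "cl_mult n q x y \<in> cl_carrier n"
  unfolding cl_carrier_def cl_mult_def
proof (intro CollectI allI impI)
  fix C assume "(\<Sum>A\<in>Pow {..<n}. \<Sum>B\<in>Pow {..<n}.
      if (A - B) \<union> (B - A) = C then x A * y B * blade_sign q A B else 0) \<noteq> 0"
  then obtain A where A: "A \<in> Pow {..<n}" and "(\<Sum>B\<in>Pow {..<n}.
      if (A - B) \<union> (B - A) = C then x A * y B * blade_sign q A B else 0) \<noteq> 0"
    by (rule sum.not_neutral_contains_not_neutral)
  from this(2) obtain B where "B \<in> Pow {..<n}" and "(if (A - B) \<union> (B - A) = C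
      then x A * y B * blade_sign q A B else 0) \<noteq> 0"
    by (rule sum.not_neutral_contains_not_neutral)
  with A show "C \<subseteq> {..<n}" by (auto split: if_splits)
qed

lemma cl_add_carrier: "x \<in> cl_carrier n \<Longrightarrow> y \<in> cl_carrier n \<Longrightarrow> cl_add x y \<in> cl_carrier n"
  unfolding cl_carrier_def cl_add_def by (smt (verit) add_0 mem_Collect_eq)

lemma cl_scale_carrier: "x \<in> cl_carrier n \<Longrightarrow> cl_scale c x \<in> cl_carrier n"
  unfolding cl_carrier_def cl_scale_def by auto

lemma cl_cross_carrier: "x \<in> cl_carrier n \<Longrightarrow> cl_cross x \<in> cl_carrier n"
  unfolding cl_carrier_def cl_cross_def cl_conj_def cl_rev_def by auto

lemma cl_one_carrier: "cl_one \<in> cl_carrier n"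
  unfolding cl_carrier_def cl_one_def by auto

lemma blade_carrier: "A \<subseteq> {..<n} \<Longrightarrow> blade A \<in> cl_carrier n"
  unfolding cl_carrier_def blade_def by auto

lemma cl_cross_cross [simp]: "cl_cross (cl_cross x) = x"
  unfolding cl_cross_def cl_conj_def cl_rev_def
  by (simp add: fun_eq_iff mult.assoc[symmetric] power_mult_distrib[symmetric])

lemma cl_mult_blade_left:
  assumes A: "A \<subseteq> {..<n}" and z: "z \<in> cl_carrier n"
  shows "cl_mult n q (blade A) z C = blade_sign q A (sym_diff A C) * z (sym_diff A C)"
proof -
  have row: "(\<Sum>B\<in>Pow {..<n}. if sym_diff A' B = C then blade A A' * z B * blade_sign q A' B else 0)
      = (if A' = A then (\<Sum>B\<in>Pow {..<n}. if sym_diff A B = C then z B * blade_sign q A B else 0)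
         else 0)" for A'
    by (cases "A' = A") (simp_all add: blade_def cong: if_cong)
  have "cl_mult n q (blade A) z C =
      (\<Sum>B\<in>Pow {..<n}. if sym_diff A B = C then z B * blade_sign q A B else 0)"
    unfolding cl_mult_def row using A by (simp add: sum.delta)
  also have "\<dots> = (\<Sum>B\<in>Pow {..<n}. if B = sym_diff A C then z B * blade_sign q A B else 0)"
    by (rule sum.cong) auto
  also have "\<dots> = blade_sign q A (sym_diff A C) * z (sym_diff A C)"
    using z unfolding cl_carrier_def by (auto simp: sum.delta')
  finally show ?thesis .
qed

lemma cl_mult_blade_right:
  assumes A: "A \<subseteq> {..<n}" and z: "z \<in> cl_carrier n"
  shows "cl_mult n q z (blade A) C = z (sym_diff C A) * blade_sign q (sym_diff C A) A"
proof -
  have column: "(\<Sum>A'\<in>Pow {..<n}. if sym_diff B A' = C then z B * blade A A' * blade_sign q B A' else 0)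
      = (if sym_diff B A = C then z B * blade_sign q B A else 0)" for B
  proof -
    have "(if sym_diff B A' = C then z B * blade A A' * blade_sign q B A' else 0)
        = (if A' = A then (if sym_diff B A = C then z B * blade_sign q B A else 0) else 0)" for A'
      by (simp add: blade_def cong: if_cong)
    then show ?thesis using A by (simp add: sum.delta)
  qed
  have "cl_mult n q z (blade A) C =
      (\<Sum>B\<in>Pow {..<n}. if sym_diff B A = C then z B * blade_sign q B A else 0)"
    unfolding cl_mult_def column ..
  also have "\<dots> = (\<Sum>B\<in>Pow {..<n}. if B = sym_diff C A then z B * blade_sign q B A else 0)"
    by (rule sum.cong) auto
  also have "\<dots> = z (sym_diff C A) * blade_sign q (sym_diff C A) A"
    using z unfolding cl_carrier_def by (auto simp: sum.delta')
  finally show ?thesis .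
qed

lemma blade_sign_generator_sandwich:
  assumes "finite C"
  shows "blade_sign q {i} C * blade_sign q (sym_diff C {i}) {i} = complex_of_real (q i) * (-1) ^ card (C - {i})"
proof -
  have left: "card {(a, j). a \<in> {i} \<and> j \<in> C \<and> j < a} = card {j \<in> C. j < i}"
    by (rule bij_betw_same_card[of snd]) (auto simp: bij_betw_def inj_on_def image_iff)
  have right: "card {(a, j). a \<in> sym_diff C {i} \<and> j \<in> {i} \<and> j < a} = card {j \<in> C. i < j}"
    by (rule bij_betw_same_card[of fst]) (auto simp: bij_betw_def inj_on_def image_iff)
  have split: "card {j \<in> C. j < i} + card {j \<in> C. i < j} = card (C - {i})"
    using assms by (subst card_Un_disjoint[symmetric]) (auto intro: arg_cong[where f = card])
  have weight: "(\<Prod>a\<in>{i} \<inter> C. q a) * (\<Prod>a\<in>sym_diff C {i} \<inter> {i}. q a) = q i"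
    by (cases "i \<in> C") auto
  have "blade_sign q {i} C * blade_sign q (sym_diff C {i}) {i} =
      (-1) ^ (card {j \<in> C. j < i} + card {j \<in> C. i < j}) *
      complex_of_real ((\<Prod>a\<in>{i} \<inter> C. q a) * (\<Prod>a\<in>sym_diff C {i} \<inter> {i}. q a))"
    unfolding blade_sign_def left right by (simp add: power_add)
  then show ?thesis
    by (simp only: split weight mult.commute)
qed

lemma cl_mult_generator_sandwich:
  assumes i: "i < n" and z: "z \<in> cl_carrier n"
  shows "cl_mult n q (cl_mult n q (blade {i}) z) (blade {i}) C =
    complex_of_real (q i) * (-1) ^ card (C - {i}) * z C"
proof (cases "C \<subseteq> {..<n}")
  case True
  then have "finite C" using finite_subset finite_lessThan by blast
  moreover have "sym_diff {i} (sym_diff C {i}) = C" by auto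
  ultimately show ?thesis
    using i z blade_sign_generator_sandwich[of C q i]
    by (simp add: cl_mult_blade_right cl_mult_blade_left cl_mult_carrier mult_ac)
next
  case False
  then show ?thesis
    using z cl_mult_carrier[of n q "cl_mult n q (blade {i}) z" "blade {i}"]
    unfolding cl_carrier_def by (simp add: mem_Collect_eq) (metis mult_zero_right)
qed

lemma cl_mult_generator_square:
  assumes "i < n"
  shows "cl_mult n q (blade {i}) (blade {i}) = cl_scale (complex_of_real (q i)) cl_one"
proof
  fix D
  have no_inversions: "{(a, j). a = i \<and> j = i \<and> j < a} = {}" by auto
  have "blade_sign q {i} {i} = complex_of_real (q i)"
    unfolding blade_sign_def by (simp add: no_inversions)
  moreover have "cl_mult n q (blade {i}) (blade {i}) D =
      blade_sign q {i} (sym_diff {i} D) * blade {i} (sym_diff {i} D)"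
    using assms by (simp add: cl_mult_blade_left blade_carrier)
  ultimately show "cl_mult n q (blade {i}) (blade {i}) D = cl_scale (complex_of_real (q i)) cl_one D"
    by (auto simp: blade_def cl_scale_def cl_one_def)
qed

text \<open>The blade \<open>e\<^sub>C\<close> commutes with \<open>e\<^sub>i\<close> iff \<open>card (C - {i})\<close> is even.\<close>

lemma card_Diff_singleton_even_imp_empty:
  fixes n :: nat
  assumes "even n" and C: "C \<subseteq> {..<n}" and even: "\<forall>i<n. even (card (C - {i}))"
  shows "C = {}"
proof (rule ccontr)
  assume "C \<noteq> {}"
  have "finite C" by (rule finite_subset[OF C]) simp
  show False
  proof (cases "even (card C)")
    case True
    obtain i where "i \<in> C" using \<open>C \<noteq> {}\<close> by blast
    then have "i < n" using C by blast
    have "card C > 0" using \<open>finite C\<close> \<open>C \<noteq> {}\<close> by (simp add: card_gt_0_iff)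
    moreover have "card (C - {i}) = card C - 1" using \<open>i \<in> C\<close> \<open>finite C\<close> by simp
    moreover have "even (card (C - {i}))" using even \<open>i < n\<close> by blast
    ultimately show False using True by simp
  next
    case False
    then have "C \<noteq> {..<n}" using \<open>even n\<close> by auto
    then obtain i where "i < n" "i \<notin> C" using C by blast
    then have "C - {i} = C" by blast
    with False even \<open>i < n\<close> show False by metis
  qed
qed

definition commuting_part :: "nat set \<Rightarrow> clel \<Rightarrow> clel" where
  "commuting_part S z = (\<lambda>C. if \<forall>i\<in>S. even (card (C - {i})) then z C else 0)"

lemma commuting_part_carrier: "z \<in> cl_carrier n \<Longrightarrow> commuting_part S z \<in> cl_carrier n"
  unfolding cl_carrier_def commuting_part_def by auto

lemma commuting_part_insert:
  assumes i: "i < n" and "q i \<noteq> 0" and z: "z \<in> cl_carrier n"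
  shows "commuting_part (insert i S) z =
    cl_scale (1/2) (cl_add (commuting_part S z) (cl_scale (1 / complex_of_real (q i))
      (cl_mult n q (cl_mult n q (blade {i}) (commuting_part S z)) (blade {i}))))"
proof
  fix C
  show "commuting_part (insert i S) z C = cl_scale (1/2) (cl_add (commuting_part S z)
      (cl_scale (1 / complex_of_real (q i))
        (cl_mult n q (cl_mult n q (blade {i}) (commuting_part S z)) (blade {i})))) C"
    using \<open>q i \<noteq> 0\<close>
    by (simp add: cl_mult_generator_sandwich[OF i commuting_part_carrier[OF z]]
        cl_scale_def cl_add_def) (simp add: commuting_part_def)
qed

lemma commuting_part_generators:
  fixes n :: nat
  assumes "even n" and z: "z \<in> cl_carrier n"
  shows "commuting_part {..<n} z = cl_scale (z {}) cl_one"
proof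
  fix C
  show "commuting_part {..<n} z C = cl_scale (z {}) cl_one C"
  proof (cases "C \<subseteq> {..<n}")
    case True
    then show ?thesis
      using card_Diff_singleton_even_imp_empty[OF \<open>even n\<close> True]
      by (auto simp: commuting_part_def cl_scale_def cl_one_def)
  next
    case False
    then have "z C = 0" "C \<noteq> {}" using z unfolding cl_carrier_def by auto
    then show ?thesis by (simp add: commuting_part_def cl_scale_def cl_one_def)
  qed
qed

lemma scalar_matrix_eq_mat_mult:
  fixes M :: "'a::semiring_1^'n^'m"
  shows "(\<chi> i j. c * M $ i $ j) = mat c ** M"
  unfolding matrix_matrix_mult_def mat_def
  by (auto simp: vec_eq_iff if_distrib if_distribR sum.delta'[OF finite] cong: if_cong)

lemma mat_mult_eq_scalar_matrix:
  fixes M :: "'a::comm_semiring_1^'n^'m"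
  shows "M ** mat c = (\<chi> i j. c * M $ i $ j)"
  unfolding matrix_matrix_mult_def mat_def
  by (auto simp: vec_eq_iff if_distrib if_distribR sum.delta[OF finite] mult.commute cong: if_cong)

lemma mat_mult_commute:
  fixes M :: "'a::comm_semiring_1^'n^'n"
  shows "mat c ** M = M ** mat c"
  by (simp add: scalar_matrix_eq_mat_mult[symmetric] mat_mult_eq_scalar_matrix)

lemma mat_mult_mat: "mat c ** mat d = (mat (c * d) :: 'a::comm_semiring_1^'n^'n)"
  by (simp only: scalar_matrix_eq_mat_mult[symmetric]) (simp add: vec_eq_iff mat_def)

lemma matrix_vector_mult_scalar: "M *v (c *s v) = c *s (M *v v :: 'a::comm_semiring_1^'n)"
  by (simp add: matrix_vector_mult_def vec_eq_iff sum_distrib_left mult_ac)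

lemma matrix_mul_right_inverse_iff:
  assumes "B ** B' = mat 1" "B' ** B = mat 1"
  shows "X ** B = Y \<longleftrightarrow> X = Y ** (B' :: 'a::semiring_1^'n^'n)"
  by (metis assms matrix_mul_assoc matrix_mul_rid)

lemma hermitian_form_diff_right:
  assumes "hermitian_form h"
  shows "h \<psi> (u - v) = h \<psi> u - h \<psi> v"
proof -
  have "h \<psi> ((u - v) + v) = h \<psi> (u - v) + h \<psi> v"
    using assms unfolding hermitian_form_def by blast
  then show ?thesis by simp
qed

lemma nondegenerate_hermitian_matrix_eq_iff:
  assumes H: "hermitian_form h" and N: "nondegenerate_form h"
  shows "(\<forall>\<psi> \<phi>. h \<psi> (M *v \<phi>) = h \<psi> (P *v \<phi>)) \<longleftrightarrow> M = P"
proof (intro iffI)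
  assume eq: "\<forall>\<psi> \<phi>. h \<psi> (M *v \<phi>) = h \<psi> (P *v \<phi>)"
  show "M = P"
    unfolding matrix_eq
  proof
    fix \<phi>
    have "h (M *v \<phi> - P *v \<phi>) \<psi> = 0" for \<psi>
      using H eq hermitian_form_diff_right[OF H] unfolding hermitian_form_def
      by (metis complex_cnj_zero right_minus_eq)
    then have "M *v \<phi> - P *v \<phi> = 0"
      using N unfolding nondegenerate_form_def by blast
    then show "M *v \<phi> = P *v \<phi>" by simp
  qed
qed simp

lemma hermitian_form_twist_iff:
  assumes H: "hermitian_form h"
  shows "hermitian_form (\<lambda>\<psi> \<phi>. h \<psi> (M *v \<phi>)) \<longleftrightarrow> (\<forall>\<psi> \<phi>. h (M *v \<psi>) \<phi> = h \<psi> (M *v \<phi>))"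
proof -
  have add: "h \<psi> (u + v) = h \<psi> u + h \<psi> v"
    and scale: "h \<psi> (c *s u) = c * h \<psi> u"
    and sym: "h \<phi> \<psi> = cnj (h \<psi> \<phi>)" for \<psi> \<phi> u v c
    using H unfolding hermitian_form_def by blast+
  have "h \<psi> (M *v (\<phi> + \<eta>)) = h \<psi> (M *v \<phi>) + h \<psi> (M *v \<eta>)"
    and "h \<psi> (M *v (c *s \<phi>)) = c * h \<psi> (M *v \<phi>)" for \<psi> \<phi> \<eta> c
    by (simp_all add: add scale matrix_vector_right_distrib matrix_vector_mult_scalar)
  moreover have "cnj (h \<psi> (M *v \<phi>)) = h (M *v \<phi>) \<psi>" for \<psi> \<phi>
    by (rule sym[symmetric])
  ultimately show ?thesis
    unfolding hermitian_form_def by auto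
qed

lemma nondegenerate_form_twist_nonzero:
  fixes h :: "complex^'k \<Rightarrow> complex^'k \<Rightarrow> complex"
  assumes "hermitian_form h" and "nondegenerate_form (\<lambda>\<psi> \<phi>. h \<psi> (M *v \<phi>))"
  shows "M \<noteq> 0"
proof
  assume "M = 0"
  then have "(\<chi> i. 1) = (0 :: complex^'k)"
    using assms hermitian_form_diff_right[of h _ 0 0] unfolding nondegenerate_form_def by simp
  then show False by (simp add: vec_eq_iff)
qed

lemma nondegenerate_form_twist:
  assumes N: "nondegenerate_form h" and inv: "M ** P = mat 1"
  shows "nondegenerate_form (\<lambda>\<psi> \<phi>. h \<psi> (M *v \<phi>))"
  unfolding nondegenerate_form_def
proof (intro allI impI)
  fix \<psi> assume "\<forall>\<phi>. h \<psi> (M *v \<phi>) = 0"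
  then have "h \<psi> (M *v (P *v \<phi>)) = 0" for \<phi> by blast
  then have "\<forall>\<phi>. h \<psi> \<phi> = 0" by (simp add: matrix_vector_mul_assoc inv)
  then show "\<psi> = 0" using N unfolding nondegenerate_form_def by blast
qed

lemma cl_group_inverse:
  assumes "b \<in> cl_group n q"
  shows "b \<in> cl_carrier n" "cl_inv n q b \<in> cl_carrier n"
    "cl_mult n q b (cl_inv n q b) = cl_one" "cl_mult n q (cl_inv n q b) b = cl_one"
proof -
  have "\<exists>h. h \<in> cl_carrier n \<and> cl_mult n q b h = cl_one \<and> cl_mult n q h b = cl_one"
    using assms unfolding cl_group_def cl_invertible_def by blast
  from someI_ex[OF this] show "cl_inv n q b \<in> cl_carrier n"
    "cl_mult n q b (cl_inv n q b) = cl_one" "cl_mult n q (cl_inv n q b) b = cl_one"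
    unfolding cl_inv_def by blast+
  show "b \<in> cl_carrier n"
    using assms unfolding cl_group_def cl_invertible_def by blast
qed

locale clifford_rep =
  fixes n :: nat and q :: "nat \<Rightarrow> real" and \<rho> :: "clel \<Rightarrow> complex^'k^'k"
  assumes rep: "cl_rep n q \<rho>"
begin

lemma rep_add: "x \<in> cl_carrier n \<Longrightarrow> y \<in> cl_carrier n \<Longrightarrow> \<rho> (cl_add x y) = \<rho> x + \<rho> y"
  using rep unfolding cl_rep_def by blast

lemma rep_scale: "x \<in> cl_carrier n \<Longrightarrow> \<rho> (cl_scale c x) = mat c ** \<rho> x"
  using rep unfolding cl_rep_def scalar_matrix_eq_mat_mult by blast

lemma rep_mult: "x \<in> cl_carrier n \<Longrightarrow> y \<in> cl_carrier n \<Longrightarrow> \<rho> (cl_mult n q x y) = \<rho> x ** \<rho> y"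
  using rep unfolding cl_rep_def by blast

lemma rep_one: "\<rho> cl_one = mat 1"
  using rep unfolding cl_rep_def by blast

lemma rep_scalar: "\<rho> (cl_scale c cl_one) = mat c"
  by (simp add: rep_scale cl_one_carrier rep_one)

lemma rep_inverse:
  assumes "b \<in> cl_carrier n" "b' \<in> cl_carrier n" "cl_mult n q b b' = cl_one"
  shows "\<rho> b ** \<rho> b' = mat 1"
  using assms rep_mult rep_one by metis

lemma c_compatible_matrix_adjoint:
  assumes "c_compatible n h \<rho>" and "a \<in> cl_carrier n"
  shows "h (\<rho> a *v \<psi>) \<phi> = h \<psi> (\<rho> (cl_cross a) *v \<phi>)"
  using assms unfolding c_compatible_def by blast

lemma sigma_compatible_twist_iff:
  assumes H: "hermitian_form h" and N: "nondegenerate_form h" and cc: "c_compatible n h \<rho>"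
    and b: "b \<in> cl_carrier n" and b': "b' \<in> cl_carrier n"
    and inv: "\<rho> b ** \<rho> b' = mat 1" "\<rho> b' ** \<rho> b = mat 1"
  shows "sigma_compatible n (\<lambda>a. cl_mult n q (cl_mult n q b (cl_conj a)) b') (\<lambda>\<psi> \<phi>. h \<psi> (M *v \<phi>)) \<rho>
    \<longleftrightarrow> (\<forall>y\<in>cl_carrier n. \<rho> y ** (M ** \<rho> b) = (M ** \<rho> b) ** \<rho> y)"
proof -
  have cross_sigma: "\<rho> (cross_sigma (\<lambda>a. cl_mult n q (cl_mult n q b (cl_conj a)) b') a) =
      \<rho> b ** \<rho> (cl_cross a) ** \<rho> b'" if "a \<in> cl_carrier n" for a
    using that b b'
    by (simp add: cross_sigma_def cl_cross_def[symmetric] rep_mult cl_mult_carrier cl_cross_carrier)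
  have "sigma_compatible n (\<lambda>a. cl_mult n q (cl_mult n q b (cl_conj a)) b') (\<lambda>\<psi> \<phi>. h \<psi> (M *v \<phi>)) \<rho>
    \<longleftrightarrow> (\<forall>a\<in>cl_carrier n. \<forall>\<psi> \<phi>. h \<psi> ((\<rho> (cl_cross a) ** M) *v \<phi>) =
        h \<psi> ((M ** (\<rho> b ** \<rho> (cl_cross a) ** \<rho> b')) *v \<phi>))"
    unfolding sigma_compatible_def
    by (simp add: c_compatible_matrix_adjoint[OF cc] cross_sigma matrix_vector_mul_assoc)
  also have "\<dots> \<longleftrightarrow> (\<forall>a\<in>cl_carrier n. \<rho> (cl_cross a) ** M = M ** (\<rho> b ** \<rho> (cl_cross a) ** \<rho> b'))"
    by (simp add: nondegenerate_hermitian_matrix_eq_iff[OF H N])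
  also have "\<dots> \<longleftrightarrow> (\<forall>y\<in>cl_carrier n. \<rho> y ** M = M ** \<rho> b ** \<rho> y ** \<rho> b')"
    by (metis cl_cross_carrier cl_cross_cross matrix_mul_assoc)
  also have "\<dots> \<longleftrightarrow> (\<forall>y\<in>cl_carrier n. \<rho> y ** (M ** \<rho> b) = (M ** \<rho> b) ** \<rho> y)"
    by (simp add: matrix_mul_right_inverse_iff[OF inv] matrix_mul_assoc)
  finally show ?thesis .
qed

lemma nondegenerate_form_twist_scaled_iff:
  fixes h :: "complex^'k \<Rightarrow> complex^'k \<Rightarrow> complex"
  assumes H: "hermitian_form h" and N: "nondegenerate_form h"
    and b': "b' \<in> cl_carrier n" and inv: "\<rho> b' ** \<rho> b = mat 1"
  shows "nondegenerate_form (\<lambda>\<psi> \<phi>. h \<psi> (\<rho> (cl_scale t b') *v \<phi>)) \<longleftrightarrow> t \<noteq> 0"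
proof
  assume "nondegenerate_form (\<lambda>\<psi> \<phi>. h \<psi> (\<rho> (cl_scale t b') *v \<phi>))"
  then have "\<rho> (cl_scale t b') \<noteq> 0" by (rule nondegenerate_form_twist_nonzero[OF H])
  then show "t \<noteq> 0" using b' by (auto simp: rep_scale)
next
  assume "t \<noteq> 0"
  have "\<rho> (cl_scale t b') ** (mat (1 / t) ** \<rho> b) = mat t ** (\<rho> b' ** mat (1 / t)) ** \<rho> b"
    using b' by (simp add: rep_scale matrix_mul_assoc)
  also have "\<dots> = mat (t * (1 / t)) ** (\<rho> b' ** \<rho> b)"
    by (simp add: mat_mult_commute[of _ "\<rho> b'", symmetric] mat_mult_mat matrix_mul_assoc)
  also have "\<dots> = mat 1"
    using \<open>t \<noteq> 0\<close> by (simp add: inv)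
  finally have "\<rho> (cl_scale t b') ** (mat (1 / t) ** \<rho> b) = mat 1" .
  then show "nondegenerate_form (\<lambda>\<psi> \<phi>. h \<psi> (\<rho> (cl_scale t b') *v \<phi>))"
    by (rule nondegenerate_form_twist[OF N])
qed

end

locale even_clifford_rep = clifford_rep +
  assumes even_dim: "even n" and q_nonzero: "\<forall>i<n. q i \<noteq> 0"
begin

lemma rep_commuting_part_eq_0:
  assumes z: "z \<in> cl_carrier n" and "\<rho> z = 0" and "finite S" and "S \<subseteq> {..<n}"
  shows "\<rho> (commuting_part S z) = 0"
  using \<open>finite S\<close> \<open>S \<subseteq> {..<n}\<close>
proof (induction S rule: finite_induct)
  case empty
  then show ?case using \<open>\<rho> z = 0\<close> by (simp add: commuting_part_def)
next
  case (insert i S)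
  let ?w = "commuting_part S z"
  have i: "i < n" and w: "\<rho> ?w = 0" using insert by auto
  have wc: "?w \<in> cl_carrier n" using z by (rule commuting_part_carrier)
  have ec: "blade {i} \<in> cl_carrier n" using i by (simp add: blade_carrier)
  have "\<rho> (cl_mult n q (cl_mult n q (blade {i}) ?w) (blade {i})) = 0"
    by (simp add: rep_mult cl_mult_carrier ec wc w)
  moreover have "q i \<noteq> 0" using q_nonzero i by blast
  ultimately show ?case
    by (simp add: commuting_part_insert[OF i _ z] rep_scale rep_add cl_add_carrier
        cl_scale_carrier cl_mult_carrier wc w)
qed

lemma rep_eq_0_scalar_part:
  assumes z: "z \<in> cl_carrier n" and "\<rho> z = 0"
  shows "z {} = 0"
proof -
  have "\<rho> (cl_scale (z {}) cl_one) = 0"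
    using rep_commuting_part_eq_0[OF assms finite_lessThan subset_refl]
    by (simp add: commuting_part_generators[OF even_dim z])
  then have "\<rho> (cl_scale (z {}) cl_one) $ undefined $ undefined = 0" by simp
  then show ?thesis by (simp add: rep_scalar mat_def)
qed

lemma rep_eq_0_imp_zero:
  assumes z: "z \<in> cl_carrier n" and "\<rho> z = 0"
  shows "z = (\<lambda>_. 0)"
proof
  fix A
  show "z A = 0"
  proof (cases "A \<subseteq> {..<n}")
    case True
    then have "blade A \<in> cl_carrier n" by (rule blade_carrier)
    then have "cl_mult n q (blade A) z {} = 0"
      by (simp add: rep_eq_0_scalar_part cl_mult_carrier rep_mult z \<open>\<rho> z = 0\<close>)
    moreover have "blade_sign q A A \<noteq> 0"
      using q_nonzero True finite_subset[OF True] by (auto simp: blade_sign_def)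
    ultimately show ?thesis using cl_mult_blade_left[OF True z, of q "{}"] by simp
  next
    case False
    then show ?thesis using z unfolding cl_carrier_def by auto
  qed
qed

lemma rep_inject:
  assumes x: "x \<in> cl_carrier n" and y: "y \<in> cl_carrier n"
  shows "\<rho> x = \<rho> y \<longleftrightarrow> x = y"
proof
  assume "\<rho> x = \<rho> y"
  have diff: "cl_add x (cl_scale (-1) y) \<in> cl_carrier n"
    using x y by (simp add: cl_add_carrier cl_scale_carrier)
  have "\<rho> (cl_add x (cl_scale (-1) y)) = 0"
    using \<open>\<rho> x = \<rho> y\<close> x y
    by (simp add: rep_add rep_scale cl_scale_carrier scalar_matrix_eq_mat_mult[symmetric] vec_eq_iff)
  then have "cl_add x (cl_scale (-1) y) = (\<lambda>_. 0)" by (rule rep_eq_0_imp_zero[OF diff])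
  then show "x = y" unfolding cl_add_def cl_scale_def by (auto simp: fun_eq_iff dest: fun_cong)
qed simp

lemma rep_central_imp_scalar:
  assumes z: "z \<in> cl_carrier n" and central: "\<forall>y\<in>cl_carrier n. \<rho> y ** \<rho> z = \<rho> z ** \<rho> y"
  shows "z = cl_scale (z {}) cl_one"
proof -
  have "z C = 0" if i: "i < n" and odd: "odd (card (C - {i}))" for C i
  proof -
    let ?e = "blade {i}"
    have ec: "?e \<in> cl_carrier n" using i by (simp add: blade_carrier)
    have "\<rho> (cl_mult n q (cl_mult n q ?e z) ?e) = \<rho> z ** \<rho> (cl_mult n q ?e ?e)"
      using central ec by (simp add: rep_mult cl_mult_carrier z matrix_mul_assoc)
    also have "\<dots> = \<rho> (cl_scale (complex_of_real (q i)) z)"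
      using i z by (simp add: cl_mult_generator_square rep_scalar rep_scale mat_mult_commute)
    finally have "cl_mult n q (cl_mult n q ?e z) ?e C = cl_scale (complex_of_real (q i)) z C"
      by (simp add: rep_inject cl_mult_carrier cl_scale_carrier z)
    then show "z C = 0"
      using cl_mult_generator_sandwich[OF i z, of q C] odd q_nonzero i by (simp add: cl_scale_def)
  qed
  then have "commuting_part {..<n} z = z"
    by (auto simp: commuting_part_def fun_eq_iff)
  then show ?thesis using commuting_part_generators[OF even_dim z] by simp
qed

lemma rep_central_twist_iff_scaled_inverse:
  assumes b: "b \<in> cl_carrier n" and b': "b' \<in> cl_carrier n"
    and inv: "\<rho> b ** \<rho> b' = mat 1" "\<rho> b' ** \<rho> b = mat 1" and x: "x \<in> cl_carrier n"
  shows "(\<forall>y\<in>cl_carrier n. \<rho> y ** (\<rho> x ** \<rho> b) = (\<rho> x ** \<rho> b) ** \<rho> y)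
    \<longleftrightarrow> (\<exists>t. x = cl_scale t b')"
proof
  assume central: "\<forall>y\<in>cl_carrier n. \<rho> y ** (\<rho> x ** \<rho> b) = (\<rho> x ** \<rho> b) ** \<rho> y"
  define z where "z = cl_mult n q x b"
  have z: "z \<in> cl_carrier n" and rz: "\<rho> z = \<rho> x ** \<rho> b"
    unfolding z_def using x b by (simp_all add: cl_mult_carrier rep_mult)
  have "\<rho> x = \<rho> z ** \<rho> b'"
    by (simp add: rz inv flip: matrix_mul_assoc)
  also have "\<dots> = \<rho> (cl_scale (z {}) b')"
    using rep_central_imp_scalar[OF z] central b'
    by (metis rz rep_scalar rep_scale)
  finally show "\<exists>t. x = cl_scale t b'"
    using x b' by (auto simp: rep_inject cl_scale_carrier)
next
  assume "\<exists>t. x = cl_scale t b'"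
  then obtain t where "x = cl_scale t b'" by blast
  then have "\<rho> x ** \<rho> b = mat t"
    using b' by (simp add: rep_scale inv flip: matrix_mul_assoc)
  then show "\<forall>y\<in>cl_carrier n. \<rho> y ** (\<rho> x ** \<rho> b) = (\<rho> x ** \<rho> b) ** \<rho> y"
    by (simp add: mat_mult_commute)
qed

lemma hermitian_form_twist_iff_cross_fixed:
  assumes H: "hermitian_form h" and N: "nondegenerate_form h" and cc: "c_compatible n h \<rho>"
    and x: "x \<in> cl_carrier n"
  shows "hermitian_form (\<lambda>\<psi> \<phi>. h \<psi> (\<rho> x *v \<phi>)) \<longleftrightarrow> x = cl_cross x"
proof -
  have "hermitian_form (\<lambda>\<psi> \<phi>. h \<psi> (\<rho> x *v \<phi>))
      \<longleftrightarrow> (\<forall>\<psi> \<phi>. h \<psi> (\<rho> (cl_cross x) *v \<phi>) = h \<psi> (\<rho> x *v \<phi>))"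
    by (simp add: hermitian_form_twist_iff[OF H] c_compatible_matrix_adjoint[OF cc x])
  also have "\<dots> \<longleftrightarrow> \<rho> (cl_cross x) = \<rho> x"
    by (rule nondegenerate_hermitian_matrix_eq_iff[OF H N])
  also have "\<dots> \<longleftrightarrow> x = cl_cross x"
    using x by (auto simp: rep_inject cl_cross_carrier)
  finally show ?thesis .
qed

end

theorem lemma5:
  fixes n :: nat and q :: "nat \<Rightarrow> real"
    and \<rho> :: "clel \<Rightarrow> complex^'k^'k"
    and h :: "complex^'k \<Rightarrow> complex^'k \<Rightarrow> complex"
    and b x :: clel
  assumes "even n"
    and "\<forall>i<n. q i \<noteq> 0"
    and "cl_rep n q \<rho>"
    and "\<exists>a\<in>cl_carrier n. \<rho> a \<noteq> 0"
    and "hermitian_form h" and "nondegenerate_form h"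
    and "c_compatible n h \<rho>"
    and "b \<in> cl_group n q"
    and "admissible_real_structure n q (\<lambda>a. cl_mult n q (cl_mult n q b (cl_conj a)) (cl_inv n q b))"
    and "x \<in> cl_carrier n"
  shows "(krein_product (\<lambda>\<psi> \<phi>. h \<psi> (\<rho> x *v \<phi>)) \<and>
          sigma_compatible n (\<lambda>a. cl_mult n q (cl_mult n q b (cl_conj a)) (cl_inv n q b))
            (\<lambda>\<psi> \<phi>. h \<psi> (\<rho> x *v \<phi>)) \<rho>)
         \<longleftrightarrow> (x = cl_cross x \<and> (\<exists>t. t \<noteq> 0 \<and> x = cl_scale t (cl_inv n q b)))"
proof -
  interpret even_clifford_rep n q \<rho>
    using assms(1-3) by unfold_locales
  note H = assms(5) and N = assms(6) and cc = assms(7) and x = assms(10)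
  note b = cl_group_inverse[OF assms(8)]
  have inv: "\<rho> b ** \<rho> (cl_inv n q b) = mat 1" "\<rho> (cl_inv n q b) ** \<rho> b = mat 1"
    using b by (simp_all add: rep_inverse)
  have "sigma_compatible n (\<lambda>a. cl_mult n q (cl_mult n q b (cl_conj a)) (cl_inv n q b))
      (\<lambda>\<psi> \<phi>. h \<psi> (\<rho> x *v \<phi>)) \<rho> \<longleftrightarrow> (\<exists>t. x = cl_scale t (cl_inv n q b))"
    using sigma_compatible_twist_iff[OF H N cc b(1,2) inv] rep_central_twist_iff_scaled_inverse[OF b(1,2) inv x]
    by simp
  then show ?thesis
    unfolding krein_product_def
    using hermitian_form_twist_iff_cross_fixed[OF H N cc x]
      nondegenerate_form_twist_scaled_iff[OF H N b(2) inv(2)]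
    by blast
qed

end
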